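(* Let $\Gamma$ be a well-ordered set and let $f:[\Gamma]^2\to\{0,1\}$ be a partition of the first kind. Let $P_f:\ell_1(\Gamma)\to\mathbb{C}$ be the quadratic functional $P_f(x)=\sum_{\{i,j\}\in f^{-1}(1)}x_ix_j$. If $Y$ is a linear subspace of $\ell_1(\Gamma)$ with $Y\subset P_f^{-1}(0)$, then $Y$ is separable.
   Context: $\ell_1(\Gamma)$ is the complex Banach space of absolutely summable families $x=(x_\gamma)_{\gamma\in\Gamma}$. $[\Gamma]^2$ denotes the set of two-element subsets of $\Gamma$, and we write $f(\alpha,\beta)$ for $f(\{\alpha,\beta\})$. For a finite set $a\subset\Gamma$ of cardinality $n$ and $k<n$, $a(k)$ denotes the $(k+1)$-th element of $a$ in the well order of $\Gamma$, so $a=\{a(0),\dots,a(n-1)\}$. A function $f:[\Gamma]^2\to\{0,1\}$ is a partition of the first kind if for every $n<\omega$, every uncountable family $A$ of pairwise disjoint subsets of $\Gamma$ each of cardinality $n$, and every $k<n$, there exist $a,b,a',b'\in A$ with $a\neq b$, $a'\neq b'$, such that $f(a(k),b(k))=1$, $f(a'(k),b'(k))=0$, and $f(a(i),b(j))=f(a'(i),b'(j))$ for all $(i,j)\in n\times n$ with $(i,j)\neq(k,k)$. *)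

theory Defs
  imports "HOL-Analysis.Analysis"
begin

text \<open>The well-ordered set Gamma is modelled as a type of class wellorder.
  Elements of ell_1(Gamma) are complex-valued families that are absolutely summable.\<close>

definition ell1 :: "('a \<Rightarrow> complex) set" where
  "ell1 = {x. (\<lambda>g. norm (x g)) summable_on UNIV}"

definition ell1_norm :: "('a \<Rightarrow> complex) \<Rightarrow> real" where
  "ell1_norm x = (\<Sum>\<^sub>\<infinity>g. norm (x g))"

text \<open>k-th element (0-based) of a finite set in the well order.\<close>
definition nth_elem :: "'a::linorder set \<Rightarrow> nat \<Rightarrow> 'a" where
  "nth_elem a k = sorted_list_of_set a ! k"

text \<open>f is a colouring of two-element sets; f(alpha,beta) = f {alpha,beta}.\<close>
definition partition_first_kind :: "('a::wellorder set \<Rightarrow> nat) \<Rightarrow> bool" where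
  "partition_first_kind f \<longleftrightarrow>
     (\<forall>n::nat. \<forall>A::'a set set.
        (uncountable A \<and> pairwise disjnt A \<and> (\<forall>a\<in>A. finite a \<and> card a = n)) \<longrightarrow>
        (\<forall>k<n. \<exists>a\<in>A. \<exists>b\<in>A. \<exists>a'\<in>A. \<exists>b'\<in>A. a \<noteq> b \<and> a' \<noteq> b' \<and>
            f {nth_elem a k, nth_elem b k} = 1 \<and>
            f {nth_elem a' k, nth_elem b' k} = 0 \<and>
            (\<forall>i<n. \<forall>j<n. (i, j) \<noteq> (k, k) \<longrightarrow>
               f {nth_elem a i, nth_elem b j} = f {nth_elem a' i, nth_elem b' j})))"

definition P_f :: "('a::wellorder set \<Rightarrow> nat) \<Rightarrow> ('a \<Rightarrow> complex) \<Rightarrow> complex" where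
  "P_f f x = (\<Sum>\<^sub>\<infinity>(i, j) \<in> {(i, j). i < j \<and> f {i, j} = 1}. x i * x j)"

definition linear_subspace_ell1 :: "('a \<Rightarrow> complex) set \<Rightarrow> bool" where
  "linear_subspace_ell1 Y \<longleftrightarrow> Y \<subseteq> ell1 \<and> (\<lambda>_. 0) \<in> Y \<and>
     (\<forall>x\<in>Y. \<forall>y\<in>Y. (\<lambda>g. x g + y g) \<in> Y) \<and>
     (\<forall>c::complex. \<forall>x\<in>Y. (\<lambda>g. c * x g) \<in> Y)"

definition separable_ell1 :: "('a \<Rightarrow> complex) set \<Rightarrow> bool" where
  "separable_ell1 Y \<longleftrightarrow> (\<exists>D. countable D \<and> D \<subseteq> Y \<and>
     (\<forall>y\<in>Y. \<forall>e>0. \<exists>d\<in>D. ell1_norm (\<lambda>g. y g - d g) < e))"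

end

theory Submission
  imports Defs
begin

text \<open>Suppose \<open>Y\<close> is not separable. Then for some \<open>\<theta> > 0\<close> uncountably many coordinates \<open>p\<close>
  carry a vector \<open>y\<^sub>p \<in> Y\<close> of norm at most \<open>1\<close> with \<open>\<bar>y\<^sub>p p\<bar> \<ge> \<theta>\<close>. As \<open>P_f\<close> vanishes on the
  subspace \<open>Y\<close>, so does its polar form \<open>B(x, z) = \<Sum> x\<^sub>i z\<^sub>j\<close> (over ordered pairs with \<open>f {i, j} = 1\<close>)
  on \<open>Y \<times> Y\<close>. Truncate each \<open>y\<^sub>p\<close> to a finite support and pass to an uncountable \<open>\<Delta>\<close>-system on
  which the colouring between root and petals and the (rounded) coefficients of the \<open>y\<^sub>p\<close> do not
  depend on \<open>p\<close>. A partition of the first kind then yields \<open>p, q, p', q'\<close> for which the truncations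
  of \<open>B(y\<^sub>p, y\<^sub>q)\<close> and \<open>B(y\<^sub>p\<^sub>', y\<^sub>q\<^sub>')\<close> have the same coefficients except at one diagonal entry.
  Both are small, yet they differ by about \<open>y\<^sub>p\<^sub>0(p\<^sub>0)\<^sup>2\<close>, whose modulus is at least \<open>\<theta>\<^sup>2\<close>.\<close>

section \<open>Absolutely summable families\<close>

lemma ell1_iff: "x \<in> ell1 \<longleftrightarrow> (\<lambda>g. norm (x g)) summable_on UNIV"
  by (simp add: ell1_def)

lemma ell1_abs_summable_on: "x \<in> ell1 \<Longrightarrow> (\<lambda>g. norm (x g)) summable_on A"
  unfolding ell1_iff by (auto intro: summable_on_subset_banach)

lemma ell1_norm_nonneg: "0 \<le> ell1_norm x"
  unfolding ell1_norm_def by (simp add: infsum_nonneg)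

lemma ell1_dominated: "x \<in> ell1 \<Longrightarrow> (\<And>g. norm (z g) \<le> norm (x g)) \<Longrightarrow> z \<in> ell1"
  unfolding ell1_iff by (rule Infinite_Sum.abs_summable_on_comparison_test) auto

lemma ell1_diff:
  assumes "x \<in> ell1" "z \<in> ell1"
  shows "(\<lambda>g. x g - z g) \<in> ell1"
proof -
  have "(\<lambda>g. norm (x g) + norm (z g)) summable_on UNIV"
    using assms unfolding ell1_iff by (rule summable_on_add)
  then show ?thesis
    unfolding ell1_iff by (rule summable_on_comparison_test) (auto intro: norm_triangle_ineq4)
qed

lemma ell1_finite_support: "finite F \<Longrightarrow> (\<And>g. g \<notin> F \<Longrightarrow> x g = 0) \<Longrightarrow> x \<in> ell1"
  unfolding ell1_iff
  by (rule finite_nonzero_values_imp_summable_on) (auto intro: finite_subset)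

lemma norm_le_ell1_norm: "x \<in> ell1 \<Longrightarrow> norm (x p) \<le> ell1_norm x"
  unfolding ell1_norm_def ell1_iff
  using finite_sum_le_infsum[of "\<lambda>g. norm (x g)" UNIV "{p}"] by auto

lemma ell1_norm_mono: "x \<in> ell1 \<Longrightarrow> (\<And>g. norm (z g) \<le> norm (x g)) \<Longrightarrow> ell1_norm z \<le> ell1_norm x"
  unfolding ell1_norm_def
  by (rule infsum_mono) (auto intro: ell1_dominated simp flip: ell1_iff)

lemma ell1_norm_scale: "ell1_norm (\<lambda>g. c * x g) = norm c * ell1_norm x"
  unfolding ell1_norm_def by (simp add: norm_mult infsum_cmult_right')

lemma ell1_norm_triangle:
  assumes "x \<in> ell1" "z \<in> ell1"
  shows "ell1_norm (\<lambda>g. x g + z g) \<le> ell1_norm x + ell1_norm z"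
proof -
  have sum: "(\<lambda>g. norm (x g) + norm (z g)) summable_on UNIV"
    using assms unfolding ell1_iff by (rule summable_on_add)
  then have "ell1_norm (\<lambda>g. x g + z g) \<le> (\<Sum>\<^sub>\<infinity>g. norm (x g) + norm (z g))"
    unfolding ell1_norm_def
    by (intro infsum_mono summable_on_comparison_test[OF sum]) (auto intro: norm_triangle_ineq)
  also have "\<dots> = ell1_norm x + ell1_norm z"
    unfolding ell1_norm_def using assms unfolding ell1_iff by (rule infsum_add)
  finally show ?thesis .
qed

lemma ell1_norm_split:
  assumes "x \<in> ell1" "finite F"
  shows "ell1_norm x = (\<Sum>g\<in>F. norm (x g)) + ell1_norm (\<lambda>g. if g \<in> F then 0 else x g)"
proof -
  have "ell1_norm x = (\<Sum>\<^sub>\<infinity>g\<in>F \<union> (UNIV - F). norm (x g))"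
    unfolding ell1_norm_def by (simp add: Un_Diff_cancel)
  also have "\<dots> = (\<Sum>\<^sub>\<infinity>g\<in>F. norm (x g)) + (\<Sum>\<^sub>\<infinity>g\<in>UNIV - F. norm (x g))"
    by (rule infsum_Un_disjoint) (auto intro: ell1_abs_summable_on assms(1))
  also have "(\<Sum>\<^sub>\<infinity>g\<in>UNIV - F. norm (x g)) = ell1_norm (\<lambda>g. if g \<in> F then 0 else x g)"
    unfolding ell1_norm_def by (rule infsum_cong_neutral) auto
  finally show ?thesis using assms(2) by simp
qed

lemma ell1_small_tail:
  assumes "x \<in> ell1" "d > 0"
  obtains F where "finite F" "ell1_norm (\<lambda>g. if g \<in> F then 0 else x g) < d"
proof -
  obtain F where F: "finite F" "dist (\<Sum>g\<in>F. norm (x g)) (ell1_norm x) \<le> d/2"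
    using infsum_finite_approximation[of "\<lambda>g. norm (x g)" UNIV "d/2"] assms
    unfolding ell1_iff ell1_norm_def by auto
  with ell1_norm_split[OF assms(1) F(1)] assms(2)
  have "ell1_norm (\<lambda>g. if g \<in> F then 0 else x g) < d"
    by (simp add: dist_real_def)
  with F(1) show ?thesis by (rule that)
qed

section \<open>The polar form of \<open>P_f\<close>\<close>

definition edges :: "('a set \<Rightarrow> nat) \<Rightarrow> ('a \<times> 'a) set" where
  "edges f = {(i, j). i \<noteq> j \<and> f {i, j} = 1}"

definition edge_indicator :: "('a set \<Rightarrow> nat) \<Rightarrow> 'a \<Rightarrow> 'a \<Rightarrow> complex" where
  "edge_indicator f i j = (if (i, j) \<in> edges f then 1 else 0)"

definition polar_form :: "('a set \<Rightarrow> nat) \<Rightarrow> ('a \<Rightarrow> complex) \<Rightarrow> ('a \<Rightarrow> complex) \<Rightarrow> complex" where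
  "polar_form f x z = (\<Sum>\<^sub>\<infinity>(i, j)\<in>edges f. x i * z j)"

lemma infsum_diff:
  fixes u v :: "'b \<Rightarrow> 'c::{topological_ab_group_add, t2_space}"
  assumes "u summable_on A" "v summable_on A"
  shows "(\<Sum>\<^sub>\<infinity>a\<in>A. u a - v a) = infsum u A - infsum v A"
  using infsum_add[OF assms(1) summable_on_uminus[THEN iffD2, OF assms(2)]] by (simp add: infsum_uminus)

lemma has_sum_norm_product:
  assumes "x \<in> ell1" "z \<in> ell1"
  shows "((\<lambda>(i, j). norm (x i) * norm (z j)) has_sum ell1_norm x * ell1_norm z) UNIV"
proof -
  have hx: "((\<lambda>i. norm (x i)) has_sum ell1_norm x) UNIV"
    and hz: "((\<lambda>j. norm (z j)) has_sum ell1_norm z) UNIV"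
    using assms unfolding ell1_iff ell1_norm_def by simp_all
  have rows: "((\<lambda>j. (\<lambda>(i, j). norm (x i) * norm (z j)) (i, j)) has_sum norm (x i) * ell1_norm z) UNIV" for i
    using has_sum_cmult_right[OF hz] by simp
  have cols: "((\<lambda>i. norm (x i) * ell1_norm z) has_sum ell1_norm x * ell1_norm z) UNIV"
    using has_sum_cmult_left[OF hx] by simp
  have "(\<lambda>(i, j). norm (x i) * norm (z j)) summable_on UNIV \<times> UNIV"
    using cols by (intro summable_on_SigmaI[OF rows]) (auto simp: summable_on_def)
  with has_sum_SigmaI[OF rows cols] show ?thesis by simp
qed

lemma ell1_product_abs_summable_on:
  assumes "x \<in> ell1" "z \<in> ell1"
  shows "(\<lambda>p. norm ((\<lambda>(i, j). x i * z j) p)) summable_on A"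
proof -
  have "(\<lambda>(i, j). norm (x i) * norm (z j)) summable_on UNIV"
    using has_sum_norm_product[OF assms] by (auto simp: summable_on_def)
  then have "(\<lambda>(i, j). norm (x i) * norm (z j)) summable_on A"
    by (rule summable_on_subset_banach) simp
  moreover have "(\<lambda>p. norm ((\<lambda>(i, j). x i * z j) p)) = (\<lambda>(i, j). norm (x i) * norm (z j))"
    by (auto simp: norm_mult)
  ultimately show ?thesis by simp
qed

lemma ell1_product_summable_on:
  assumes "x \<in> ell1" "z \<in> ell1"
  shows "(\<lambda>(i, j). x i * z j) summable_on A"
  using ell1_product_abs_summable_on[OF assms] by (rule abs_summable_summable)

lemma norm_polar_form_le:
  assumes "x \<in> ell1" "z \<in> ell1"
  shows "norm (polar_form f x z) \<le> ell1_norm x * ell1_norm z"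
proof -
  have "norm (polar_form f x z) \<le> (\<Sum>\<^sub>\<infinity>p\<in>edges f. norm ((\<lambda>(i, j). x i * z j) p))"
    unfolding polar_form_def by (rule norm_infsum_bound) (rule ell1_product_abs_summable_on[OF assms])
  also have "\<dots> \<le> (\<Sum>\<^sub>\<infinity>p. norm ((\<lambda>(i, j). x i * z j) p))"
    by (rule infsum_mono_neutral) (auto intro: ell1_product_abs_summable_on[OF assms])
  also have "(\<lambda>p. norm ((\<lambda>(i, j). x i * z j) p)) = (\<lambda>(i, j). norm (x i) * norm (z j))"
    by (auto simp: norm_mult)
  also have "(\<Sum>\<^sub>\<infinity>p. (\<lambda>(i, j). norm (x i) * norm (z j)) p) = ell1_norm x * ell1_norm z"
    by (rule infsumI[OF has_sum_norm_product[OF assms]])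
  finally show ?thesis .
qed

lemma polar_form_diff_left:
  assumes "x \<in> ell1" "x' \<in> ell1" "z \<in> ell1"
  shows "polar_form f (\<lambda>g. x g - x' g) z = polar_form f x z - polar_form f x' z"
proof -
  have "(\<lambda>(i, j). (x i - x' i) * z j) = (\<lambda>p. (\<lambda>(i, j). x i * z j) p - (\<lambda>(i, j). x' i * z j) p)"
    by (auto simp: fun_eq_iff left_diff_distrib)
  then show ?thesis
    unfolding polar_form_def
    using infsum_diff[OF ell1_product_summable_on[OF assms(1,3)] ell1_product_summable_on[OF assms(2,3)]]
    by simp
qed

lemma polar_form_diff_right:
  assumes "x \<in> ell1" "z \<in> ell1" "z' \<in> ell1"
  shows "polar_form f x (\<lambda>g. z g - z' g) = polar_form f x z - polar_form f x z'"
proof -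
  have "(\<lambda>(i, j). x i * (z j - z' j)) = (\<lambda>p. (\<lambda>(i, j). x i * z j) p - (\<lambda>(i, j). x i * z' j) p)"
    by (auto simp: fun_eq_iff right_diff_distrib)
  then show ?thesis
    unfolding polar_form_def
    using infsum_diff[OF ell1_product_summable_on[OF assms(1,2)] ell1_product_summable_on[OF assms(1,3)]]
    by simp
qed

lemma polar_form_finite_support:
  assumes "finite F" "finite G" "\<And>g. g \<notin> F \<Longrightarrow> x g = 0" "\<And>g. g \<notin> G \<Longrightarrow> z g = 0"
  shows "polar_form f x z = (\<Sum>i\<in>F. \<Sum>j\<in>G. edge_indicator f i j * x i * z j)"
proof -
  have "x i \<noteq> 0 \<Longrightarrow> i \<in> F" "z j \<noteq> 0 \<Longrightarrow> j \<in> G" for i j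
    using assms(3,4) by blast+
  then have "polar_form f x z = (\<Sum>\<^sub>\<infinity>(i, j)\<in>F \<times> G. edge_indicator f i j * x i * z j)"
    unfolding polar_form_def by (intro infsum_cong_neutral) (auto simp: edge_indicator_def)
  also have "\<dots> = (\<Sum>i\<in>F. \<Sum>j\<in>G. edge_indicator f i j * x i * z j)"
    using assms(1,2) by (simp add: sum.cartesian_product)
  finally show ?thesis .
qed

text \<open>Each edge \<open>{i, j}\<close> contributes \<open>x i * z j + z i * x j\<close>, i.e. both orientations.\<close>
lemma P_f_add:
  fixes f :: "'a::wellorder set \<Rightarrow> nat"
  assumes "x \<in> ell1" "z \<in> ell1"
  shows "P_f f (\<lambda>g. x g + z g) = P_f f x + P_f f z + polar_form f x z"
proof -
  define S where "S = {(i, j). i < j \<and> f {i, j} = 1}"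
  have edges: "edges f = S \<union> prod.swap ` S" "S \<inter> prod.swap ` S = {}"
    unfolding S_def edges_def by (auto simp: insert_commute image_iff neq_iff)
  have sum: "(\<lambda>(i, j). u i * w j) summable_on A" if "u \<in> ell1" "w \<in> ell1" for u w A
    by (rule ell1_product_summable_on[OF that])
  have "P_f f (\<lambda>g. x g + z g) = (\<Sum>\<^sub>\<infinity>p\<in>S. ((\<lambda>(i, j). x i * x j) p + (\<lambda>(i, j). z i * z j) p)
      + ((\<lambda>(i, j). x i * z j) p + (\<lambda>(i, j). z i * x j) p))"
    unfolding P_f_def S_def by (rule infsum_cong) (auto simp: algebra_simps)
  also have "\<dots> = (\<Sum>\<^sub>\<infinity>p\<in>S. (\<lambda>(i, j). x i * x j) p + (\<lambda>(i, j). z i * z j) p)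
      + ((\<Sum>\<^sub>\<infinity>p\<in>S. (\<lambda>(i, j). x i * z j) p) + (\<Sum>\<^sub>\<infinity>p\<in>S. (\<lambda>(i, j). z i * x j) p))"
    using assms by (simp only: infsum_add summable_on_add sum)
  also have "(\<Sum>\<^sub>\<infinity>p\<in>S. (\<lambda>(i, j). x i * x j) p + (\<lambda>(i, j). z i * z j) p) = P_f f x + P_f f z"
    unfolding P_f_def S_def using assms by (simp only: infsum_add sum)
  also have "(\<Sum>\<^sub>\<infinity>p\<in>S. (\<lambda>(i, j). z i * x j) p) = (\<Sum>\<^sub>\<infinity>p\<in>prod.swap ` S. (\<lambda>(i, j). x i * z j) p)"
    by (subst infsum_reindex) (auto simp: o_def mult.commute)
  also have "(\<Sum>\<^sub>\<infinity>p\<in>S. (\<lambda>(i, j). x i * z j) p) + \<dots> = polar_form f x z"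
    unfolding polar_form_def edges(1)
    by (rule infsum_Un_disjoint[symmetric]) (simp_all add: edges(2) sum[OF assms])
  finally show ?thesis by simp
qed

lemma polar_form_vanishes_on_isotropic_subspace:
  fixes f :: "'a::wellorder set \<Rightarrow> nat"
  assumes "linear_subspace_ell1 Y" "\<forall>x\<in>Y. P_f f x = 0" "y \<in> Y" "z \<in> Y"
  shows "polar_form f y z = 0"
proof -
  have "y \<in> ell1" "z \<in> ell1" "(\<lambda>g. y g + z g) \<in> Y"
    using assms(1,3,4) unfolding linear_subspace_ell1_def by auto
  with P_f_add[of y z f] assms(2-4) show ?thesis by simp
qed

lemma norm_truncated_polar_form_le:
  assumes "y \<in> ell1" "z \<in> ell1" "polar_form f y z = 0" "ell1_norm y \<le> 1" "ell1_norm z \<le> 1"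
    and "finite F" "finite G"
    and tails: "ell1_norm (\<lambda>g. if g \<in> F then 0 else y g) \<le> \<delta>" "ell1_norm (\<lambda>g. if g \<in> G then 0 else z g) \<le> \<delta>"
  shows "norm (\<Sum>i\<in>F. \<Sum>j\<in>G. edge_indicator f i j * y i * z j) \<le> 2 * \<delta>"
proof -
  define y\<^sub>F where "y\<^sub>F g = (if g \<in> F then y g else 0)" for g
  define z\<^sub>G where "z\<^sub>G g = (if g \<in> G then z g else 0)" for g
  define y\<^sub>t where "y\<^sub>t g = (if g \<in> F then 0 else y g)" for g
  define z\<^sub>t where "z\<^sub>t g = (if g \<in> G then 0 else z g)" for g
  have ell1: "y\<^sub>F \<in> ell1" "z\<^sub>G \<in> ell1" "y\<^sub>t \<in> ell1" "z\<^sub>t \<in> ell1"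
    unfolding y\<^sub>F_def z\<^sub>G_def y\<^sub>t_def z\<^sub>t_def using assms(1,2) by (auto intro: ell1_dominated)
  have "ell1_norm y\<^sub>F \<le> ell1_norm y"
    by (rule ell1_norm_mono[OF assms(1)]) (simp add: y\<^sub>F_def)
  with assms(4) have "ell1_norm y\<^sub>F \<le> 1"
    by simp
  have "polar_form f y\<^sub>F z\<^sub>G = (\<Sum>i\<in>F. \<Sum>j\<in>G. edge_indicator f i j * y\<^sub>F i * z\<^sub>G j)"
    by (rule polar_form_finite_support[OF assms(6,7)]) (simp_all add: y\<^sub>F_def z\<^sub>G_def)
  then have "(\<Sum>i\<in>F. \<Sum>j\<in>G. edge_indicator f i j * y i * z j) = polar_form f y\<^sub>F z\<^sub>G"
    by (simp add: y\<^sub>F_def z\<^sub>G_def)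
  also have "\<dots> = polar_form f y z - polar_form f y\<^sub>t z - polar_form f y\<^sub>F z\<^sub>t"
  proof -
    have "(\<lambda>g. y g - y\<^sub>t g) = y\<^sub>F" "(\<lambda>g. z g - z\<^sub>t g) = z\<^sub>G"
      by (auto simp: y\<^sub>F_def y\<^sub>t_def z\<^sub>G_def z\<^sub>t_def)
    then show ?thesis
      using polar_form_diff_left[OF assms(1) ell1(3) assms(2), of f]
        polar_form_diff_right[OF ell1(1) assms(2) ell1(4), of f]
      by simp
  qed
  also have "norm \<dots> \<le> norm (polar_form f y\<^sub>t z) + norm (polar_form f y\<^sub>F z\<^sub>t)"
    using assms(3) norm_triangle_ineq4[of "- polar_form f y\<^sub>t z" "polar_form f y\<^sub>F z\<^sub>t"] by simp
  also have "\<dots> \<le> \<delta> * 1 + 1 * \<delta>"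
  proof (rule add_mono)
    have "0 \<le> \<delta>"
      using tails(1) ell1_norm_nonneg[of y\<^sub>t] unfolding y\<^sub>t_def by linarith
    show "norm (polar_form f y\<^sub>t z) \<le> \<delta> * 1"
      using norm_polar_form_le[OF ell1(3) assms(2), of f] tails(1) assms(5) \<open>0 \<le> \<delta>\<close>
        mult_mono[of "ell1_norm y\<^sub>t" \<delta> "ell1_norm z" 1] ell1_norm_nonneg[of z]
      unfolding y\<^sub>t_def by linarith
    show "norm (polar_form f y\<^sub>F z\<^sub>t) \<le> 1 * \<delta>"
      using norm_polar_form_le[OF ell1(1) ell1(4), of f] tails(2) \<open>ell1_norm y\<^sub>F \<le> 1\<close>
        mult_mono[of "ell1_norm y\<^sub>F" 1 "ell1_norm z\<^sub>t" \<delta>] ell1_norm_nonneg[of z\<^sub>t]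
      unfolding z\<^sub>t_def by linarith
  qed
  finally show ?thesis
    by simp
qed

lemma norm_reindexed_polar_form_le:
  assumes "y \<in> ell1" "z \<in> ell1" "polar_form f y z = 0" "ell1_norm y \<le> 1" "ell1_norm z \<le> 1"
    and "finite J" "bij_betw \<sigma> J F" "bij_betw \<tau> J G"
    and "ell1_norm (\<lambda>g. if g \<in> F then 0 else y g) \<le> \<delta>" "ell1_norm (\<lambda>g. if g \<in> G then 0 else z g) \<le> \<delta>"
  shows "norm (\<Sum>\<alpha>\<in>J. \<Sum>\<beta>\<in>J. edge_indicator f (\<sigma> \<alpha>) (\<tau> \<beta>) * y (\<sigma> \<alpha>) * z (\<tau> \<beta>)) \<le> 2 * \<delta>"
proof -
  have "finite F" "finite G"
    using assms(6-8) bij_betw_finite by blast+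
  have "(\<Sum>i\<in>F. \<Sum>j\<in>G. edge_indicator f i j * y i * z j)
      = (\<Sum>\<alpha>\<in>J. \<Sum>j\<in>G. edge_indicator f (\<sigma> \<alpha>) j * y (\<sigma> \<alpha>) * z j)"
    by (rule sum.reindex_bij_betw[OF assms(7), symmetric])
  also have "\<dots> = (\<Sum>\<alpha>\<in>J. \<Sum>\<beta>\<in>J. edge_indicator f (\<sigma> \<alpha>) (\<tau> \<beta>) * y (\<sigma> \<alpha>) * z (\<tau> \<beta>))"
    by (intro sum.cong refl sum.reindex_bij_betw[OF assms(8), symmetric])
  finally show ?thesis
    using assms \<open>finite F\<close> \<open>finite G\<close> norm_truncated_polar_form_le[of y z f F G \<delta>] by simp
qed

section \<open>Uncountable families of finite sets\<close>

lemma uncountable_fibre: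
  assumes "uncountable P" "countable S" "\<And>p. p \<in> P \<Longrightarrow> h p \<in> S"
  obtains v where "uncountable {p\<in>P. h p = v}"
proof -
  have "\<not> (\<forall>v\<in>S. countable {p\<in>P. h p = v})"
  proof
    assume "\<forall>v\<in>S. countable {p\<in>P. h p = v}"
    then have "countable (\<Union>v\<in>S. {p\<in>P. h p = v})"
      using assms(2) by (intro countable_UN) auto
    moreover have "(\<Union>v\<in>S. {p\<in>P. h p = v}) = P"
      using assms(3) by blast
    ultimately show False
      using assms(1) by simp
  qed
  with that show ?thesis by blast
qed

lemma uncountable_disjoint_subfamily:
  assumes unc: "uncountable P" and fin: "\<forall>p\<in>P. finite (F p)"
    and cnt: "\<And>x. countable {p\<in>P. x \<in> F p}"
  obtains D where "D \<subseteq> P" "uncountable D" "disjoint_family_on F D"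
proof -
  define \<A> where "\<A> = {D. D \<subseteq> P \<and> disjoint_family_on F D}"
  have "\<Union>C \<in> \<A>" if "C \<in> chains \<A>" for C
  proof -
    have C: "C \<subseteq> \<A>" "chain\<^sub>\<subseteq> C"
      using that by (auto simp: chains_def)
    have "pairwise (\<lambda>p q. F p \<inter> F q = {}) S" if "S \<in> C" for S
      using C(1) that unfolding \<A>_def disjoint_family_on_def pairwise_def by blast
    with C have "pairwise (\<lambda>p q. F p \<inter> F q = {}) (\<Union>C)"
      by (intro pairwise_chain_Union)
    with C(1) show ?thesis
      unfolding \<A>_def disjoint_family_on_def pairwise_def by blast
  qed
  then obtain M where "M \<in> \<A>" and max: "\<And>X. X \<in> \<A> \<Longrightarrow> M \<subseteq> X \<Longrightarrow> X = M"
    using Zorn_Lemma[of \<A>] by blast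
  then have M: "M \<subseteq> P" "disjoint_family_on F M"
    unfolding \<A>_def by auto
  have "uncountable M"
  proof
    assume "countable M"
    define U where "U = (\<Union>p\<in>M. F p)"
    define B where "B = M \<union> (\<Union>x\<in>U. {p\<in>P. x \<in> F p})"
    have "countable U"
      unfolding U_def using \<open>countable M\<close> fin M(1) by (intro countable_UN) (auto intro: countable_finite)
    then have "countable B"
      unfolding B_def using \<open>countable M\<close> cnt by (intro countable_Un countable_UN) simp_all
    then have "P - B \<noteq> {}"
      by (intro infinite_imp_nonempty uncountable_infinite uncountable_minus_countable[OF unc])
    then obtain p where p: "p \<in> P" "p \<notin> B"
      by blast
    have "F p \<inter> F q = {}" if "q \<in> M" for q
    proof (rule equals0I)
      fix x assume "x \<in> F p \<inter> F q"
      then have "p \<in> B"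
        unfolding B_def U_def using p(1) that by blast
      with p(2) show False ..
    qed
    then have "disjoint_family_on F (insert p M)"
      using M(2) p(2) unfolding B_def by (simp add: disjoint_family_on_insert disjoint_iff)
    then have "insert p M \<in> \<A>"
      using M(1) p(1) unfolding \<A>_def by simp
    then show False
      using max p(2) unfolding B_def by blast
  qed
  with M show ?thesis
    using that by blast
qed

lemma delta_system:
  assumes "uncountable P" "\<forall>p\<in>P. finite (F p) \<and> card (F p) \<le> m"
  shows "\<exists>P'\<subseteq>P. uncountable P' \<and> (\<exists>R. \<forall>p\<in>P'. \<forall>q\<in>P'. p \<noteq> q \<longrightarrow> F p \<inter> F q = R)"
  using assms
proof (induction m arbitrary: P F)
  case 0
  then have "\<forall>p\<in>P. \<forall>q\<in>P. p \<noteq> q \<longrightarrow> F p \<inter> F q = {}"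
    by auto
  with 0(1) show ?case
    by blast
next
  case (Suc m)
  show ?case
  proof (cases "\<exists>x. uncountable {p\<in>P. x \<in> F p}")
    case True
    then obtain x where x: "uncountable {p\<in>P. x \<in> F p}" ..
    have "\<forall>p\<in>{p\<in>P. x \<in> F p}. finite (F p - {x}) \<and> card (F p - {x}) \<le> m"
      using Suc.prems(2) by (auto simp: card_Diff_singleton)
    from Suc.IH[OF x this] obtain P' R where P': "P' \<subseteq> {p\<in>P. x \<in> F p}" "uncountable P'"
      and R: "\<forall>p\<in>P'. \<forall>q\<in>P'. p \<noteq> q \<longrightarrow> (F p - {x}) \<inter> (F q - {x}) = R"
      by (elim exE conjE)
    have "\<forall>p\<in>P'. \<forall>q\<in>P'. p \<noteq> q \<longrightarrow> F p \<inter> F q = insert x R"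
    proof (intro ballI impI)
      fix p q assume pq: "p \<in> P'" "q \<in> P'" "p \<noteq> q"
      then have "(F p - {x}) \<inter> (F q - {x}) = R" "x \<in> F p" "x \<in> F q"
        using P'(1) R by auto
      then show "F p \<inter> F q = insert x R"
        by blast
    qed
    moreover have "P' \<subseteq> P"
      using P'(1) by blast
    ultimately show ?thesis
      using P'(2) by blast
  next
    case False
    have fin: "\<forall>p\<in>P. finite (F p)"
      using Suc.prems(2) by blast
    have cnt: "countable {p\<in>P. x \<in> F p}" for x
      using False by blast
    obtain D where "D \<subseteq> P" "uncountable D" "disjoint_family_on F D"
      using uncountable_disjoint_subfamily[OF Suc.prems(1) fin cnt] by blast
    then show ?thesis
      unfolding disjoint_family_on_def by blast
  qed
qed

lemma delta_system_petals:
  assumes unc: "uncountable Z" and fin: "\<forall>p\<in>Z. finite (F p) \<and> p \<in> F p"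
  obtains P R n where "P \<subseteq> Z" "uncountable P" "finite R"
    "\<forall>p\<in>P. R \<subseteq> F p \<and> p \<notin> R \<and> card (F p - R) = n" "disjoint_family_on (\<lambda>p. F p - R) P"
proof -
  obtain m where m: "uncountable {p\<in>Z. card (F p) = m}"
    by (rule uncountable_fibre[OF unc, of UNIV "\<lambda>p. card (F p)"]) simp_all
  have "\<forall>p\<in>{p\<in>Z. card (F p) = m}. finite (F p) \<and> card (F p) \<le> m"
    using fin by auto
  from delta_system[OF m this] obtain P2 R where P2: "P2 \<subseteq> {p\<in>Z. card (F p) = m}" "uncountable P2"
    and R: "\<forall>p\<in>P2. \<forall>q\<in>P2. p \<noteq> q \<longrightarrow> F p \<inter> F q = R"
    by (elim exE conjE)
  have RF: "R \<subseteq> F p" if "p \<in> P2" for p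
  proof -
    have "P2 - {p} \<noteq> {}"
      using P2(2) by (intro infinite_imp_nonempty uncountable_infinite uncountable_minus_countable) simp_all
    then obtain q where "q \<in> P2" "q \<noteq> p"
      by blast
    with R that show ?thesis
      by blast
  qed
  have "P2 \<noteq> {}"
    using P2(2) by (intro infinite_imp_nonempty uncountable_infinite)
  then obtain p0 where p0: "p0 \<in> P2"
    by blast
  have finR: "finite R"
    using fin P2(1) p0 by (intro finite_subset[OF RF[OF p0]]) auto
  define P where "P = P2 - R"
  have "P \<subseteq> Z"
    unfolding P_def using P2(1) by auto
  moreover have "uncountable P"
    unfolding P_def using finR P2(2) by (intro uncountable_minus_countable countable_finite)
  moreover have "\<forall>p\<in>P. R \<subseteq> F p \<and> p \<notin> R \<and> card (F p - R) = m - card R"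
    unfolding P_def using RF finR P2(1) by (auto simp: card_Diff_subset)
  moreover have "disjoint_family_on (\<lambda>p. F p - R) P"
    unfolding disjoint_family_on_def P_def using R by auto
  ultimately show ?thesis
    by (rule that[OF _ _ finR])
qed

lemma ell1_supports_delta_system:
  assumes "uncountable Z" "\<And>p. p \<in> Z \<Longrightarrow> y p \<in> ell1" "\<delta> > 0"
  obtains P R a n where "P \<subseteq> Z" "uncountable P" "finite R" "disjoint_family_on a P"
    "\<And>p. p \<in> P \<Longrightarrow> finite (a p) \<and> card (a p) = n \<and> p \<in> a p \<and> R \<inter> a p = {}"
    "\<And>p. p \<in> P \<Longrightarrow> ell1_norm (\<lambda>g. if g \<in> R \<union> a p then 0 else y p g) < \<delta>"
proof -
  have "\<forall>p\<in>Z. \<exists>F. finite F \<and> p \<in> F \<and> ell1_norm (\<lambda>g. if g \<in> F then 0 else y p g) < \<delta>"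
  proof
    fix p assume p: "p \<in> Z"
    obtain F where F: "finite F" "ell1_norm (\<lambda>g. if g \<in> F then 0 else y p g) < \<delta>"
      by (rule ell1_small_tail[OF assms(2)[OF p] assms(3)])
    have "(\<lambda>g. if g \<in> F then 0 else y p g) \<in> ell1"
      by (rule ell1_dominated[OF assms(2)[OF p]]) simp
    then have "ell1_norm (\<lambda>g. if g \<in> insert p F then 0 else y p g) \<le> ell1_norm (\<lambda>g. if g \<in> F then 0 else y p g)"
      by (rule ell1_norm_mono) simp
    with F show "\<exists>F. finite F \<and> p \<in> F \<and> ell1_norm (\<lambda>g. if g \<in> F then 0 else y p g) < \<delta>"
      by (intro exI[of _ "insert p F"]) auto
  qed
  then obtain F where F: "\<forall>p\<in>Z. finite (F p) \<and> p \<in> F p \<and> ell1_norm (\<lambda>g. if g \<in> F p then 0 else y p g) < \<delta>"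
    by (rule bchoice[THEN exE])
  then have "\<forall>p\<in>Z. finite (F p) \<and> p \<in> F p"
    by blast
  then obtain P R n where P: "P \<subseteq> Z" "uncountable P" "finite R"
    and R: "\<forall>p\<in>P. R \<subseteq> F p \<and> p \<notin> R \<and> card (F p - R) = n" and disj: "disjoint_family_on (\<lambda>p. F p - R) P"
    by (rule delta_system_petals[OF assms(1)])
  show ?thesis
  proof (rule that[OF P disj])
    fix p assume "p \<in> P"
    then have p: "finite (F p)" "p \<in> F p" "ell1_norm (\<lambda>g. if g \<in> F p then 0 else y p g) < \<delta>"
      and "R \<subseteq> F p" "p \<notin> R" "card (F p - R) = n"
      using F R P(1) by auto
    then show "finite (F p - R) \<and> card (F p - R) = n \<and> p \<in> F p - R \<and> R \<inter> (F p - R) = {}"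
      by simp
    from \<open>R \<subseteq> F p\<close> have "R \<union> (F p - R) = F p"
      by blast
    with p(3) show "ell1_norm (\<lambda>g. if g \<in> R \<union> (F p - R) then 0 else y p g) < \<delta>"
      by simp
  qed
qed

lemma norm_diff_le_if_same_grid_cell:
  fixes z z' :: complex
  assumes "s > 0" "\<lfloor>Re z / s\<rfloor> = \<lfloor>Re z' / s\<rfloor>" "\<lfloor>Im z / s\<rfloor> = \<lfloor>Im z' / s\<rfloor>"
  shows "norm (z - z') \<le> 2 * s"
proof -
  have cell: "\<bar>t - t'\<bar> \<le> s" if "\<lfloor>t / s\<rfloor> = \<lfloor>t' / s\<rfloor>" for t t'
  proof -
    have "\<bar>t / s - t' / s\<bar> \<le> 1"
      using that floor_correct[of "t / s"] floor_correct[of "t' / s"] by linarith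
    then have "\<bar>t - t'\<bar> / s \<le> 1"
      using assms(1) by (simp add: abs_divide flip: diff_divide_distrib)
    then show ?thesis
      using assms(1) by (simp add: pos_divide_le_eq)
  qed
  have "norm (z - z') \<le> \<bar>Re (z - z')\<bar> + \<bar>Im (z - z')\<bar>"
    by (rule cmod_le)
  also have "\<dots> \<le> s + s"
    using cell[OF assms(2)] cell[OF assms(3)] by simp
  finally show ?thesis
    by simp
qed

lemma uncountable_almost_constant_subfamily:
  fixes w :: "'p \<Rightarrow> 'j \<Rightarrow> complex"
  assumes "uncountable P" "finite J" "e > 0" "countable S" "\<And>p. p \<in> P \<Longrightarrow> c p \<in> S"
  obtains P' p\<^sub>0 where "P' \<subseteq> P" "uncountable P'" "p\<^sub>0 \<in> P'" "\<And>p. p \<in> P' \<Longrightarrow> c p = c p\<^sub>0"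
    "\<And>p \<alpha>. p \<in> P' \<Longrightarrow> \<alpha> \<in> J \<Longrightarrow> norm (w p \<alpha> - w p\<^sub>0 \<alpha>) \<le> e"
proof -
  define cell where "cell t = (\<lfloor>Re t / (e / 2)\<rfloor>, \<lfloor>Im t / (e / 2)\<rfloor>)" for t
  define colour where "colour p = (c p, restrict (\<lambda>\<alpha>. cell (w p \<alpha>)) J)" for p
  have "countable (S \<times> (J \<rightarrow>\<^sub>E (UNIV :: (int \<times> int) set)))"
    using assms(2,4) by (intro countable_SIGMA countable_PiE) auto
  moreover have "colour p \<in> S \<times> (J \<rightarrow>\<^sub>E UNIV)" if "p \<in> P" for p
    using assms(5)[OF that] unfolding colour_def by auto
  ultimately obtain v where v: "uncountable {p\<in>P. colour p = v}"
    using uncountable_fibre[OF assms(1)] by blast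
  define P' where "P' = {p\<in>P. colour p = v}"
  have "P' \<noteq> {}"
    using v unfolding P'_def by (intro infinite_imp_nonempty uncountable_infinite)
  then obtain p\<^sub>0 where p\<^sub>0: "p\<^sub>0 \<in> P'"
    by blast
  have same_colour: "colour p = colour p\<^sub>0" if "p \<in> P'" for p
    using that p\<^sub>0 unfolding P'_def by simp
  have "norm (w p \<alpha> - w p\<^sub>0 \<alpha>) \<le> e" if "p \<in> P'" "\<alpha> \<in> J" for p \<alpha>
  proof -
    have "cell (w p \<alpha>) = cell (w p\<^sub>0 \<alpha>)"
      using same_colour[OF that(1)] that(2) unfolding colour_def by (metis restrict_apply' snd_conv)
    then have "norm (w p \<alpha> - w p\<^sub>0 \<alpha>) \<le> 2 * (e / 2)"
      using assms(3) unfolding cell_def by (intro norm_diff_le_if_same_grid_cell) auto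
    then show ?thesis
      by simp
  qed
  moreover have "c p = c p\<^sub>0" if "p \<in> P'" for p
    using same_colour[OF that] unfolding colour_def by simp
  ultimately show ?thesis
    using that[of P' p\<^sub>0] p\<^sub>0 v unfolding P'_def by blast
qed

lemma partition_first_kind_witnesses:
  assumes "partition_first_kind f" "uncountable P" "disjoint_family_on a P"
    and card: "\<And>p. p \<in> P \<Longrightarrow> finite (a p) \<and> card (a p) = n" and "k < n"
  obtains p q p' q' where "p \<in> P" "q \<in> P" "p' \<in> P" "q' \<in> P" "p \<noteq> q" "p' \<noteq> q'"
    "f {nth_elem (a p) k, nth_elem (a q) k} = 1" "f {nth_elem (a p') k, nth_elem (a q') k} = 0"
    "\<forall>i<n. \<forall>j<n. (i, j) \<noteq> (k, k) \<longrightarrow>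
       f {nth_elem (a p) i, nth_elem (a q) j} = f {nth_elem (a p') i, nth_elem (a q') j}"
proof -
  have "inj_on a P"
  proof (rule inj_onI)
    fix p q assume "p \<in> P" "q \<in> P" "a p = a q"
    have "a p \<noteq> {}"
      using card[OF \<open>p \<in> P\<close>] \<open>k < n\<close> by auto
    show "p = q"
    proof (rule ccontr)
      assume "p \<noteq> q"
      with assms(3) \<open>p \<in> P\<close> \<open>q \<in> P\<close> have "a p \<inter> a q = {}"
        unfolding disjoint_family_on_def by blast
      with \<open>a p = a q\<close> \<open>a p \<noteq> {}\<close> show False
        by simp
    qed
  qed
  then have "uncountable (a ` P)"
    using assms(2) countable_image_inj_on by auto
  moreover have "pairwise disjnt (a ` P)"
  proof (rule pairwiseI)
    fix b c assume "b \<in> a ` P" "c \<in> a ` P" "b \<noteq> c"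
    then obtain p q where "p \<in> P" "q \<in> P" "b = a p" "c = a q" "p \<noteq> q"
      by blast
    with assms(3) show "disjnt b c"
      unfolding disjoint_family_on_def disjnt_def by blast
  qed
  moreover have "\<forall>b\<in>a ` P. finite b \<and> card b = n"
    using card by simp
  ultimately have "\<forall>k<n. \<exists>b\<in>a ` P. \<exists>c\<in>a ` P. \<exists>b'\<in>a ` P. \<exists>c'\<in>a ` P. b \<noteq> c \<and> b' \<noteq> c' \<and>
      f {nth_elem b k, nth_elem c k} = 1 \<and> f {nth_elem b' k, nth_elem c' k} = 0 \<and>
      (\<forall>i<n. \<forall>j<n. (i, j) \<noteq> (k, k) \<longrightarrow> f {nth_elem b i, nth_elem c j} = f {nth_elem b' i, nth_elem c' j})"
    using assms(1)[unfolded partition_first_kind_def, THEN spec[of _ n], THEN spec[of _ "a ` P"]]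
    by simp
  then have "\<exists>b\<in>a ` P. \<exists>c\<in>a ` P. \<exists>b'\<in>a ` P. \<exists>c'\<in>a ` P. b \<noteq> c \<and> b' \<noteq> c' \<and>
      f {nth_elem b k, nth_elem c k} = 1 \<and> f {nth_elem b' k, nth_elem c' k} = 0 \<and>
      (\<forall>i<n. \<forall>j<n. (i, j) \<noteq> (k, k) \<longrightarrow> f {nth_elem b i, nth_elem c j} = f {nth_elem b' i, nth_elem c' j})"
    using \<open>k < n\<close> by simp
  then obtain b c b' c' where "b \<in> a ` P" "c \<in> a ` P" "b' \<in> a ` P" "c' \<in> a ` P"
    and bc: "b \<noteq> c" "b' \<noteq> c'" "f {nth_elem b k, nth_elem c k} = 1" "f {nth_elem b' k, nth_elem c' k} = 0"
      "\<forall>i<n. \<forall>j<n. (i, j) \<noteq> (k, k) \<longrightarrow> f {nth_elem b i, nth_elem c j} = f {nth_elem b' i, nth_elem c' j}"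
    by (elim bexE conjE)
  then obtain p q p' q' where "p \<in> P" "q \<in> P" "p' \<in> P" "q' \<in> P"
    and "b = a p" "c = a q" "b' = a p'" "c' = a q'"
    by (elim imageE)
  with bc show ?thesis
    by (intro that[of p q p' q']) auto
qed

section \<open>Separability\<close>

lemma separable_ell1_if_countable_approximants:
  assumes "countable E" "E \<subseteq> ell1" "Y \<subseteq> ell1"
    and approx: "\<And>y \<epsilon>. y \<in> Y \<Longrightarrow> \<epsilon> > 0 \<Longrightarrow> \<exists>e\<in>E. ell1_norm (\<lambda>g. y g - e g) < \<epsilon>"
  shows "separable_ell1 Y"
proof -
  define close where "close e m y \<longleftrightarrow> y \<in> Y \<and> ell1_norm (\<lambda>g. y g - e g) < 1 / real (Suc m)"
    for e m y
  define I where "I = {(e, m). e \<in> E \<and> (\<exists>y. close e m y)}"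
  define pick where "pick = (\<lambda>(e, m). SOME y. close e m y)"
  define D where "D = pick ` I"
  have pick: "close e m (pick (e, m))" if "(e, m) \<in> I" for e m
  proof -
    from that have "\<exists>y. close e m y"
      unfolding I_def by simp
    then show ?thesis
      unfolding pick_def by (simp add: someI_ex)
  qed
  have "I \<subseteq> E \<times> UNIV"
    unfolding I_def by auto
  then have "countable D"
    unfolding D_def using assms(1) by (intro countable_image countable_subset[of I "E \<times> UNIV"]) auto
  moreover have "D \<subseteq> Y"
    unfolding D_def using pick unfolding close_def by auto
  moreover have "\<exists>d\<in>D. ell1_norm (\<lambda>g. y g - d g) < \<epsilon>" if y: "y \<in> Y" and "\<epsilon> > 0" for y \<epsilon>
  proof -
    obtain m where "inverse (real (Suc m)) < \<epsilon> / 2"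
      using reals_Archimedean[of "\<epsilon> / 2"] \<open>\<epsilon> > 0\<close> by auto
    then have m: "1 / real (Suc m) < \<epsilon> / 2"
      by (simp add: inverse_eq_divide)
    obtain e where e: "e \<in> E" "close e m y"
      using approx[OF y, of "1 / real (Suc m)"] y unfolding close_def by auto
    have em: "(e, m) \<in> I"
      unfolding I_def using e by auto
    define d where "d = pick (e, m)"
    have d: "d \<in> D" "close e m d"
      using pick[OF em] em unfolding d_def D_def by auto
    have "ell1_norm (\<lambda>g. y g - d g) = ell1_norm (\<lambda>g. (y g - e g) + (e g - d g))"
      by simp
    also have "\<dots> \<le> ell1_norm (\<lambda>g. y g - e g) + ell1_norm (\<lambda>g. e g - d g)"
    proof -
      have "y \<in> ell1" "d \<in> ell1" "e \<in> ell1"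
        using y d(2) e(1) assms(2,3) unfolding close_def by auto
      then show ?thesis
        by (intro ell1_norm_triangle ell1_diff)
    qed
    also have "ell1_norm (\<lambda>g. e g - d g) = ell1_norm (\<lambda>g. d g - e g)"
      unfolding ell1_norm_def by (simp add: norm_minus_commute)
    finally have "ell1_norm (\<lambda>g. y g - d g) < \<epsilon>"
      using e(2) d(2) m unfolding close_def by linarith
    with d(1) show ?thesis by blast
  qed
  ultimately show ?thesis
    unfolding separable_ell1_def by blast
qed

lemma countable_approximants_if_countable_support:
  assumes "countable C" "Y \<subseteq> ell1" "\<forall>y\<in>Y. \<forall>g. g \<notin> C \<longrightarrow> y g = 0"
  obtains E where "countable E" "E \<subseteq> ell1"
    "\<And>y \<epsilon>. y \<in> Y \<Longrightarrow> \<epsilon> > 0 \<Longrightarrow> \<exists>e\<in>E. ell1_norm (\<lambda>g. y g - e g) < \<epsilon>"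
proof -
  obtain Q :: "complex set" where "countable Q" and Q: "\<And>X. open X \<Longrightarrow> X \<noteq> {} \<Longrightarrow> \<exists>q\<in>Q. q \<in> X"
    using countable_dense_setE by auto
  define E where "E = (\<lambda>(A, h) g. if g \<in> A then h g else 0) ` (SIGMA A:{A. finite A \<and> A \<subseteq> C}. A \<rightarrow>\<^sub>E Q)"
  have "countable E"
    unfolding E_def using \<open>countable Q\<close> assms(1)
    by (intro countable_image countable_SIGMA countable_Collect_finite_subset countable_PiE) auto
  moreover have "(\<lambda>g. if g \<in> A then h g else 0) \<in> ell1" if "finite A" for A h
    by (rule ell1_finite_support[OF that]) simp
  then have "E \<subseteq> ell1"
    unfolding E_def by auto
  moreover have "\<exists>e\<in>E. ell1_norm (\<lambda>g. y g - e g) < \<epsilon>" if y: "y \<in> Y" and "\<epsilon> > 0" for y \<epsilon>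
  proof -
    have "y \<in> ell1" using y assms(2) by auto
    then obtain A0 where A0: "finite A0" "ell1_norm (\<lambda>g. if g \<in> A0 then 0 else y g) < \<epsilon> / 2"
      using ell1_small_tail[of y "\<epsilon> / 2"] \<open>\<epsilon> > 0\<close> by auto
    define A where "A = A0 \<inter> C"
    define r where "r = \<epsilon> / (2 * (real (card A) + 1))"
    have "r > 0" using \<open>\<epsilon> > 0\<close> by (simp add: r_def)
    have "\<forall>g. \<exists>q. q \<in> Q \<and> norm (y g - q) < r"
      using Q \<open>r > 0\<close> by (metis centre_in_ball dist_norm empty_iff mem_ball open_ball)
    then obtain h where h: "\<And>g. h g \<in> Q" "\<And>g. norm (y g - h g) < r"
      using choice[of "\<lambda>g q. q \<in> Q \<and> norm (y g - q) < r"] by blast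
    define e where "e g = (if g \<in> A then h g else 0)" for g
    have "e \<in> E"
      unfolding E_def e_def using A0(1) h(1) A_def
      by (intro image_eqI[of _ _ "(A, restrict h A)"]) auto
    have "(\<lambda>g. y g - e g) \<in> ell1"
      using \<open>e \<in> E\<close> \<open>E \<subseteq> ell1\<close> \<open>y \<in> ell1\<close> by (auto intro: ell1_diff)
    then have "ell1_norm (\<lambda>g. y g - e g)
        = (\<Sum>g\<in>A. norm (y g - e g)) + ell1_norm (\<lambda>g. if g \<in> A then 0 else y g - e g)"
      using A0(1) A_def by (intro ell1_norm_split) auto
    also have "(\<lambda>g. if g \<in> A then 0 else y g - e g) = (\<lambda>g. if g \<in> A0 then 0 else y g)"
      using y assms(3) unfolding e_def A_def by auto
    also have "(\<Sum>g\<in>A. norm (y g - e g)) \<le> real (card A) * r"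
      using sum_bounded_above[of A "\<lambda>g. norm (y g - e g)" r] h(2) unfolding e_def
      by (simp add: less_imp_le)
    also have "real (card A) * r < \<epsilon> / 2"
      unfolding r_def using \<open>\<epsilon> > 0\<close> by (simp add: field_simps)
    finally have "ell1_norm (\<lambda>g. y g - e g) < \<epsilon>"
      using A0(2) by linarith
    with \<open>e \<in> E\<close> show ?thesis by blast
  qed
  ultimately show ?thesis
    by (rule that)
qed

lemma separable_ell1_if_countable_large_coordinates:
  assumes Y: "linear_subspace_ell1 Y"
    and large: "\<And>\<theta>. \<theta> > 0 \<Longrightarrow> countable {p. \<exists>y\<in>Y. ell1_norm y \<le> 1 \<and> \<theta> \<le> norm (y p)}"
  shows "separable_ell1 Y"
proof -
  have "Y \<subseteq> ell1"
    using Y unfolding linear_subspace_ell1_def by blast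
  define C where "C = (\<Union>m. {p. \<exists>y\<in>Y. ell1_norm y \<le> 1 \<and> 1 / real (Suc m) \<le> norm (y p)})"
  have "countable C"
    unfolding C_def by (intro countable_UN large) simp_all
  have support: "g \<in> C" if "y \<in> Y" "y g \<noteq> 0" for y g
  proof -
    have "0 < norm (y g)"
      using that(2) by simp
    also have "norm (y g) \<le> ell1_norm y"
      using \<open>Y \<subseteq> ell1\<close> that(1) by (intro norm_le_ell1_norm) blast
    finally have "ell1_norm y > 0" .
    define y' where "y' h = complex_of_real (1 / ell1_norm y) * y h" for h
    have "(\<lambda>h. c * y h) \<in> Y" for c
      using Y that(1) unfolding linear_subspace_ell1_def by blast
    then have "y' \<in> Y"
      unfolding y'_def .
    moreover have "ell1_norm y' \<le> 1"
      unfolding y'_def ell1_norm_scale using \<open>ell1_norm y > 0\<close> by (simp add: norm_divide)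
    moreover have "norm (y' g) > 0"
      using \<open>ell1_norm y > 0\<close> that(2) unfolding y'_def by (simp add: norm_mult)
    then obtain m where "inverse (real (Suc m)) < norm (y' g)"
      using reals_Archimedean by blast
    then have "1 / real (Suc m) \<le> norm (y' g)"
      by (simp add: inverse_eq_divide)
    ultimately have "\<exists>y\<in>Y. ell1_norm y \<le> 1 \<and> 1 / real (Suc m) \<le> norm (y g)"
      by blast
    then show "g \<in> C"
      unfolding C_def by blast
  qed
  then have "\<forall>y\<in>Y. \<forall>g. g \<notin> C \<longrightarrow> y g = 0"
    by blast
  then obtain E where "countable E" "E \<subseteq> ell1"
    "\<And>y \<epsilon>. y \<in> Y \<Longrightarrow> \<epsilon> > 0 \<Longrightarrow> \<exists>e\<in>E. ell1_norm (\<lambda>g. y g - e g) < \<epsilon>"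
    by (rule countable_approximants_if_countable_support[OF \<open>countable C\<close> \<open>Y \<subseteq> ell1\<close>])
      (assumption | rule that)+
  then show ?thesis
    by (rule separable_ell1_if_countable_approximants[OF _ _ \<open>Y \<subseteq> ell1\<close>])
qed

section \<open>Finite double sums\<close>

lemma bij_betw_nth_elem:
  assumes "finite a" "card a = n"
  shows "bij_betw (nth_elem a) {..<n} a"
proof -
  have "bij_betw ((!) (sorted_list_of_set a)) {..<n} a"
    by (rule bij_betw_nth) (use assms in auto)
  then show ?thesis
    unfolding nth_elem_def[abs_def] .
qed

lemma bij_betw_case_sum:
  assumes "bij_betw f A C" "bij_betw g B D" "C \<inter> D = {}"
  shows "bij_betw (case_sum f g) (A <+> B) (C \<union> D)"
proof -
  have "bij_betw (case_sum f g) (Inl ` A) C"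
    using assms(1) unfolding bij_betw_def inj_on_def by (auto simp: image_image)
  moreover have "bij_betw (case_sum f g) (Inr ` B) D"
    using assms(2) unfolding bij_betw_def inj_on_def by (auto simp: image_image)
  ultimately show ?thesis
    unfolding Plus_def using assms(3) by (rule bij_betw_combine)
qed

lemma norm_double_sum_diff_le:
  fixes G :: "'j \<Rightarrow> 'j \<Rightarrow> complex"
  assumes "finite J"
    and uv: "\<And>\<alpha>. \<alpha> \<in> J \<Longrightarrow> norm (u \<alpha> - v \<alpha>) \<le> e \<and> norm (u' \<alpha> - v \<alpha>) \<le> e \<and> norm (u' \<alpha>) \<le> 1 \<and> norm (v \<alpha>) \<le> 1"
    and G: "\<And>\<alpha> \<beta>. \<alpha> \<in> J \<Longrightarrow> \<beta> \<in> J \<Longrightarrow> norm (G \<alpha> \<beta>) \<le> 1"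
  shows "norm ((\<Sum>\<alpha>\<in>J. \<Sum>\<beta>\<in>J. G \<alpha> \<beta> * u \<alpha> * u' \<beta>) - (\<Sum>\<alpha>\<in>J. \<Sum>\<beta>\<in>J. G \<alpha> \<beta> * v \<alpha> * v \<beta>))
      \<le> real (card J) * (real (card J) * (2 * e))"
proof -
  have summand: "norm (G \<alpha> \<beta> * u \<alpha> * u' \<beta> - G \<alpha> \<beta> * v \<alpha> * v \<beta>) \<le> 2 * e" if "\<alpha> \<in> J" "\<beta> \<in> J" for \<alpha> \<beta>
  proof -
    have "G \<alpha> \<beta> * u \<alpha> * u' \<beta> - G \<alpha> \<beta> * v \<alpha> * v \<beta> = G \<alpha> \<beta> * ((u \<alpha> - v \<alpha>) * u' \<beta> + v \<alpha> * (u' \<beta> - v \<beta>))"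
      by (simp add: algebra_simps)
    also have "norm \<dots> \<le> norm ((u \<alpha> - v \<alpha>) * u' \<beta>) + norm (v \<alpha> * (u' \<beta> - v \<beta>))"
      unfolding norm_mult[of "G \<alpha> \<beta>"]
      using G[OF that] norm_triangle_ineq[of "(u \<alpha> - v \<alpha>) * u' \<beta>" "v \<alpha> * (u' \<beta> - v \<beta>)"]
      by (meson mult_left_le_one_le norm_ge_zero order_trans)
    also have "\<dots> \<le> e * 1 + 1 * e"
    proof -
      have "0 \<le> e"
        using uv[OF that(1)] norm_ge_zero[of "u \<alpha> - v \<alpha>"] by linarith
      then show ?thesis
        unfolding norm_mult using uv[OF that(1)] uv[OF that(2)] by (intro add_mono mult_mono) auto
    qed
    finally show ?thesis by simp
  qed
  have "norm ((\<Sum>\<alpha>\<in>J. \<Sum>\<beta>\<in>J. G \<alpha> \<beta> * u \<alpha> * u' \<beta>) - (\<Sum>\<alpha>\<in>J. \<Sum>\<beta>\<in>J. G \<alpha> \<beta> * v \<alpha> * v \<beta>))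
      = norm (\<Sum>\<alpha>\<in>J. \<Sum>\<beta>\<in>J. G \<alpha> \<beta> * u \<alpha> * u' \<beta> - G \<alpha> \<beta> * v \<alpha> * v \<beta>)"
    by (simp add: sum_subtractf)
  also have "\<dots> \<le> (\<Sum>\<alpha>\<in>J. \<Sum>\<beta>\<in>J. norm (G \<alpha> \<beta> * u \<alpha> * u' \<beta> - G \<alpha> \<beta> * v \<alpha> * v \<beta>))"
    by (rule order_trans[OF norm_sum sum_mono[OF norm_sum]])
  also have "\<dots> \<le> (\<Sum>\<alpha>\<in>J. \<Sum>\<beta>\<in>J. 2 * e)"
    using summand by (intro sum_mono) auto
  finally show ?thesis
    by simp
qed

lemma double_sum_diff_single_entry:
  fixes G G' :: "'j \<Rightarrow> 'j \<Rightarrow> complex"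
  assumes "finite J" "\<kappa> \<in> J"
    and "\<And>\<alpha> \<beta>. \<alpha> \<in> J \<Longrightarrow> \<beta> \<in> J \<Longrightarrow> G \<alpha> \<beta> - G' \<alpha> \<beta> = (if \<alpha> = \<kappa> \<and> \<beta> = \<kappa> then 1 else 0)"
  shows "(\<Sum>\<alpha>\<in>J. \<Sum>\<beta>\<in>J. G \<alpha> \<beta> * v \<alpha> * v \<beta>) - (\<Sum>\<alpha>\<in>J. \<Sum>\<beta>\<in>J. G' \<alpha> \<beta> * v \<alpha> * v \<beta>) = v \<kappa> * v \<kappa>"
proof -
  have "(\<Sum>\<alpha>\<in>J. \<Sum>\<beta>\<in>J. G \<alpha> \<beta> * v \<alpha> * v \<beta>) - (\<Sum>\<alpha>\<in>J. \<Sum>\<beta>\<in>J. G' \<alpha> \<beta> * v \<alpha> * v \<beta>)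
      = (\<Sum>\<alpha>\<in>J. \<Sum>\<beta>\<in>J. (G \<alpha> \<beta> - G' \<alpha> \<beta>) * v \<alpha> * v \<beta>)"
    by (simp add: sum_subtractf algebra_simps)
  also have "\<dots> = (\<Sum>\<alpha>\<in>J. \<Sum>\<beta>\<in>J. if \<alpha> = \<kappa> \<and> \<beta> = \<kappa> then v \<alpha> * v \<beta> else 0)"
    using assms(3) by (intro sum.cong) auto
  also have "\<dots> = (\<Sum>\<alpha>\<in>J. if \<alpha> = \<kappa> then v \<alpha> * v \<kappa> else 0)"
    using assms(1,2) by (intro sum.cong) auto
  also have "\<dots> = v \<kappa> * v \<kappa>"
    using assms(1,2) by simp
  finally show ?thesis .
qed

text \<open>At \<open>v\<close> the two double sums differ exactly by \<open>v \<kappa> ^ 2\<close>; moving each to the nearby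
  vectors where it is known to be small costs at most \<open>card J ^ 2 * 2 * e\<close>.\<close>
lemma norm_square_le_of_single_entry_switch:
  fixes G G' :: "'j \<Rightarrow> 'j \<Rightarrow> complex"
  assumes "finite J" "\<kappa> \<in> J"
    and bounded: "\<And>\<alpha> \<beta>. \<alpha> \<in> J \<Longrightarrow> \<beta> \<in> J \<Longrightarrow> norm (G \<alpha> \<beta>) \<le> 1 \<and> norm (G' \<alpha> \<beta>) \<le> 1"
    and switch: "\<And>\<alpha> \<beta>. \<alpha> \<in> J \<Longrightarrow> \<beta> \<in> J \<Longrightarrow> G \<alpha> \<beta> - G' \<alpha> \<beta> = (if \<alpha> = \<kappa> \<and> \<beta> = \<kappa> then 1 else 0)"
    and close: "\<And>\<alpha>. \<alpha> \<in> J \<Longrightarrow>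
      norm (x \<alpha> - v \<alpha>) \<le> e \<and> norm (z \<alpha> - v \<alpha>) \<le> e \<and> norm (x' \<alpha> - v \<alpha>) \<le> e \<and> norm (z' \<alpha> - v \<alpha>) \<le> e"
    and unit: "\<And>\<alpha>. \<alpha> \<in> J \<Longrightarrow> norm (z \<alpha>) \<le> 1 \<and> norm (z' \<alpha>) \<le> 1 \<and> norm (v \<alpha>) \<le> 1"
    and small: "norm (\<Sum>\<alpha>\<in>J. \<Sum>\<beta>\<in>J. G \<alpha> \<beta> * x \<alpha> * z \<beta>) \<le> d"
      "norm (\<Sum>\<alpha>\<in>J. \<Sum>\<beta>\<in>J. G' \<alpha> \<beta> * x' \<alpha> * z' \<beta>) \<le> d"
  shows "norm (v \<kappa>) ^ 2 \<le> 2 * d + 4 * e * real (card J) ^ 2"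
proof -
  define T where "T H u u' = (\<Sum>\<alpha>\<in>J. \<Sum>\<beta>\<in>J. H \<alpha> \<beta> * u \<alpha> * u' \<beta>)"
    for H :: "'j \<Rightarrow> 'j \<Rightarrow> complex" and u u'
  define c where "c = real (card J) * (real (card J) * (2 * e))"
  have near: "norm (T G x z - T G v v) \<le> c"
    unfolding T_def c_def using assms(1) by (rule norm_double_sum_diff_le) (use close unit bounded in auto)
  have near': "norm (T G' x' z' - T G' v v) \<le> c"
    unfolding T_def c_def using assms(1) by (rule norm_double_sum_diff_le) (use close unit bounded in auto)
  have "T G v v - T G' v v = v \<kappa> * v \<kappa>"
    unfolding T_def using assms(1,2) switch by (rule double_sum_diff_single_entry)
  then have "v \<kappa> * v \<kappa> = (T G v v - T G x z) + T G x z - T G' x' z' + (T G' x' z' - T G' v v)"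
    by (simp add: algebra_simps)
  then have "norm (v \<kappa>) ^ 2 = norm ((T G v v - T G x z) + T G x z - T G' x' z' + (T G' x' z' - T G' v v))"
    by (simp add: power2_eq_square flip: norm_mult)
  also have "\<dots> \<le> norm (T G v v - T G x z) + norm (T G x z) + norm (T G' x' z') + norm (T G' x' z' - T G' v v)"
    by (intro order_trans[OF norm_triangle_ineq] add_mono order_trans[OF norm_triangle_ineq4]
        order_trans[OF norm_triangle_ineq] order_refl)
  also have "\<dots> \<le> c + d + d + c"
    using near near' small unfolding T_def by (intro add_mono) (simp_all add: norm_minus_commute)
  finally show ?thesis
    by (simp add: c_def power2_eq_square algebra_simps)
qed

lemma edge_indicator_switch:
  fixes f :: "'a set \<Rightarrow> nat"
  assumes "\<alpha> \<in> R <+> {..<n}" "\<beta> \<in> R <+> {..<n}"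
    and root_row: "\<forall>r\<in>R. \<forall>i<n. f {r, x i} = 1 \<longleftrightarrow> f {r, x' i} = 1"
    and root_col: "\<forall>r\<in>R. \<forall>j<n. f {r, z j} = 1 \<longleftrightarrow> f {r, z' j} = 1"
    and outside_root: "\<forall>r\<in>R. \<forall>j<n. r \<noteq> x j \<and> r \<noteq> x' j \<and> r \<noteq> z j \<and> r \<noteq> z' j"
    and distinct: "\<forall>i<n. \<forall>j<n. x i \<noteq> z j \<and> x' i \<noteq> z' j"
    and edge: "f {x k, z k} = 1" and non_edge: "f {x' k, z' k} = 0"
    and same: "\<forall>i<n. \<forall>j<n. (i, j) \<noteq> (k, k) \<longrightarrow> f {x i, z j} = f {x' i, z' j}"
  shows "edge_indicator f (case_sum id x \<alpha>) (case_sum id z \<beta>)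
      - edge_indicator f (case_sum id x' \<alpha>) (case_sum id z' \<beta>) = (if \<alpha> = Inr k \<and> \<beta> = Inr k then 1 else 0)"
proof (cases \<alpha>)
  case (Inl r)
  with assms(1) have r: "r \<in> R" by auto
  show ?thesis
  proof (cases \<beta>)
    case (Inr j)
    with assms(2) have "j < n" by auto
    with Inl Inr r root_col outside_root show ?thesis
      by (auto simp: edge_indicator_def edges_def)
  qed (simp add: Inl)
next
  case (Inr i)
  with assms(1) have i: "i < n" by auto
  show ?thesis
  proof (cases \<beta>)
    case (Inl r)
    with assms(2) have r: "r \<in> R" by auto
    have "f {x i, r} = f {r, x i}" "f {x' i, r} = f {r, x' i}"
      by (simp_all add: insert_commute)
    with Inl Inr r i root_row outside_root show ?thesis
      by (auto simp: edge_indicator_def edges_def)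
  next
    case (Inr j)
    with assms(2) have j: "j < n" by auto
    show ?thesis
    proof (cases "i = k \<and> j = k")
      case True
      with \<open>\<alpha> = Inr i\<close> Inr edge non_edge distinct i show ?thesis
        by (auto simp: edge_indicator_def edges_def)
    next
      case False
      with same i j have "f {x i, z j} = f {x' i, z' j}" by auto
      with \<open>\<alpha> = Inr i\<close> Inr False distinct i j show ?thesis
        by (auto simp: edge_indicator_def edges_def)
    qed
  qed
qed

lemma edge_indicator_switch_delta_system:
  fixes f :: "'a::linorder set \<Rightarrow> nat"
  assumes disj: "disjoint_family_on a P"
    and a: "\<And>s. s \<in> P \<Longrightarrow> finite (a s) \<and> card (a s) = n \<and> R \<inter> a s = {}"
    and root: "\<And>s t r j. s \<in> P \<Longrightarrow> t \<in> P \<Longrightarrow> r \<in> R \<Longrightarrow> j < n \<Longrightarrow>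
      f {r, nth_elem (a s) j} = 1 \<longleftrightarrow> f {r, nth_elem (a t) j} = 1"
    and pq: "p \<in> P" "q \<in> P" "p' \<in> P" "q' \<in> P" "p \<noteq> q" "p' \<noteq> q'"
    and edge: "f {nth_elem (a p) k, nth_elem (a q) k} = 1"
    and non_edge: "f {nth_elem (a p') k, nth_elem (a q') k} = 0"
    and same_edges: "\<forall>i<n. \<forall>j<n. (i, j) \<noteq> (k, k) \<longrightarrow>
      f {nth_elem (a p) i, nth_elem (a q) j} = f {nth_elem (a p') i, nth_elem (a q') j}"
    and \<alpha>\<beta>: "\<alpha> \<in> R <+> {..<n}" "\<beta> \<in> R <+> {..<n}"
  shows "edge_indicator f (case_sum id (nth_elem (a p)) \<alpha>) (case_sum id (nth_elem (a q)) \<beta>)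
      - edge_indicator f (case_sum id (nth_elem (a p')) \<alpha>) (case_sum id (nth_elem (a q')) \<beta>)
      = (if \<alpha> = Inr k \<and> \<beta> = Inr k then 1 else 0)"
proof -
  have nth_in: "nth_elem (a s) i \<in> a s" if "s \<in> P" "i < n" for s i
    using bij_betwE[OF bij_betw_nth_elem] a[OF that(1)] that(2) by blast
  have outside_root: "r \<noteq> nth_elem (a s) j" if "s \<in> P" "r \<in> R" "j < n" for s r j
  proof -
    have "r \<notin> a s"
      using a[OF that(1)] that(2) by blast
    with nth_in[OF that(1,3)] show ?thesis
      by auto
  qed
  have distinct: "nth_elem (a s) i \<noteq> nth_elem (a t) j" if "s \<in> P" "t \<in> P" "s \<noteq> t" "i < n" "j < n" for s t i j
  proof -
    have "a s \<inter> a t = {}"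
      using disj that(1-3) unfolding disjoint_family_on_def by blast
    with nth_in[OF that(1,4)] nth_in[OF that(2,5)] show ?thesis
      by (auto simp: disjoint_iff)
  qed
  show ?thesis
  proof (rule edge_indicator_switch[OF \<alpha>\<beta> _ _ _ _ edge non_edge same_edges])
    show "\<forall>r\<in>R. \<forall>i<n. f {r, nth_elem (a p) i} = 1 \<longleftrightarrow> f {r, nth_elem (a p') i} = 1"
      "\<forall>r\<in>R. \<forall>j<n. f {r, nth_elem (a q) j} = 1 \<longleftrightarrow> f {r, nth_elem (a q') j} = 1"
      using root pq(1-4) by blast+
    show "\<forall>r\<in>R. \<forall>j<n. r \<noteq> nth_elem (a p) j \<and> r \<noteq> nth_elem (a p') j
        \<and> r \<noteq> nth_elem (a q) j \<and> r \<noteq> nth_elem (a q') j"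
      using outside_root pq(1-4) by blast
    show "\<forall>i<n. \<forall>j<n. nth_elem (a p) i \<noteq> nth_elem (a q) j \<and> nth_elem (a p') i \<noteq> nth_elem (a q') j"
      using distinct pq by blast
  qed
qed

text \<open>The heart of the argument: in a homogeneous \<open>\<Delta>\<close>-system of supports of mutually isotropic
  unit vectors, the four vectors picked by a partition of the first kind see coefficient matrices that
  differ only at the coordinate \<open>k\<close>, so that coordinate must be small.\<close>
lemma coordinate_bound_in_isotropic_delta_system:
  fixes f :: "'a::linorder set \<Rightarrow> nat" and y :: "'p \<Rightarrow> 'a \<Rightarrow> complex"
  assumes "finite R" and disj: "disjoint_family_on a P"
    and a: "\<And>s. s \<in> P \<Longrightarrow> finite (a s) \<and> card (a s) = n \<and> R \<inter> a s = {}"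
    and root: "\<And>s t r j. s \<in> P \<Longrightarrow> t \<in> P \<Longrightarrow> r \<in> R \<Longrightarrow> j < n \<Longrightarrow>
      f {r, nth_elem (a s) j} = 1 \<longleftrightarrow> f {r, nth_elem (a t) j} = 1"
    and y: "\<And>s. s \<in> P \<Longrightarrow> y s \<in> ell1 \<and> ell1_norm (y s) \<le> 1"
    and isotropic: "\<And>s t. s \<in> P \<Longrightarrow> t \<in> P \<Longrightarrow> polar_form f (y s) (y t) = 0"
    and tail: "\<And>s. s \<in> P \<Longrightarrow> ell1_norm (\<lambda>g. if g \<in> R \<union> a s then 0 else y s g) \<le> \<delta>"
    and near: "\<And>s \<alpha>. s \<in> P \<Longrightarrow> \<alpha> \<in> R <+> {..<n} \<Longrightarrow>
      norm (y s (case_sum id (nth_elem (a s)) \<alpha>) - y p\<^sub>0 (case_sum id (nth_elem (a p\<^sub>0)) \<alpha>)) \<le> e"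
    and "p\<^sub>0 \<in> P" "k < n"
    and pq: "p \<in> P" "q \<in> P" "p' \<in> P" "q' \<in> P" "p \<noteq> q" "p' \<noteq> q'"
    and edge: "f {nth_elem (a p) k, nth_elem (a q) k} = 1"
    and non_edge: "f {nth_elem (a p') k, nth_elem (a q') k} = 0"
    and same_edges: "\<forall>i<n. \<forall>j<n. (i, j) \<noteq> (k, k) \<longrightarrow>
      f {nth_elem (a p) i, nth_elem (a q) j} = f {nth_elem (a p') i, nth_elem (a q') j}"
  shows "norm (y p\<^sub>0 (nth_elem (a p\<^sub>0) k)) ^ 2 \<le> 4 * \<delta> + 4 * e * real (card R + n) ^ 2"
proof -
  define J where "J = R <+> {..<n}"
  define pos where "pos s = case_sum id (nth_elem (a s))" for s
  define v where "v \<alpha> = y p\<^sub>0 (pos p\<^sub>0 \<alpha>)" for \<alpha>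
  define G where "G s t \<alpha> \<beta> = edge_indicator f (pos s \<alpha>) (pos t \<beta>)" for s t \<alpha> \<beta>
  have "finite J" "card J = card R + n"
    unfolding J_def using \<open>finite R\<close> by (simp_all add: card_Plus)
  have pos: "bij_betw (pos s) J (R \<union> a s)" if "s \<in> P" for s
    unfolding pos_def J_def using a[OF that]
    by (intro bij_betw_case_sum bij_betw_id bij_betw_nth_elem) auto
  have unit: "norm (y s g) \<le> 1" if "s \<in> P" for s g
    using norm_le_ell1_norm[of "y s" g] y[OF that] by linarith
  have small: "norm (\<Sum>\<alpha>\<in>J. \<Sum>\<beta>\<in>J. G s t \<alpha> \<beta> * y s (pos s \<alpha>) * y t (pos t \<beta>)) \<le> 2 * \<delta>"
    if "s \<in> P" "t \<in> P" for s t
    unfolding G_def using y[OF that(1)] y[OF that(2)] isotropic[OF that] tail[OF that(1)] tail[OF that(2)]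
    by (intro norm_reindexed_polar_form_le[OF _ _ _ _ _ \<open>finite J\<close> pos[OF that(1)] pos[OF that(2)]]) simp_all
  have "norm (v (Inr k)) ^ 2 \<le> 2 * (2 * \<delta>) + 4 * e * real (card J) ^ 2"
  proof (rule norm_square_le_of_single_entry_switch[where G = "G p q" and G' = "G p' q'"
        and x = "\<lambda>\<alpha>. y p (pos p \<alpha>)" and z = "\<lambda>\<alpha>. y q (pos q \<alpha>)"
        and x' = "\<lambda>\<alpha>. y p' (pos p' \<alpha>)" and z' = "\<lambda>\<alpha>. y q' (pos q' \<alpha>)", OF \<open>finite J\<close>])
    show "Inr k \<in> J"
      unfolding J_def using \<open>k < n\<close> by auto
    show "norm (G p q \<alpha> \<beta>) \<le> 1 \<and> norm (G p' q' \<alpha> \<beta>) \<le> 1" for \<alpha> \<beta>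
      by (simp add: G_def edge_indicator_def)
    show "G p q \<alpha> \<beta> - G p' q' \<alpha> \<beta> = (if \<alpha> = Inr k \<and> \<beta> = Inr k then 1 else 0)"
      if "\<alpha> \<in> J" "\<beta> \<in> J" for \<alpha> \<beta>
      unfolding G_def pos_def
      by (rule edge_indicator_switch_delta_system[OF disj a root pq edge non_edge same_edges that[unfolded J_def]])
    show "norm (y p (pos p \<alpha>) - v \<alpha>) \<le> e \<and> norm (y q (pos q \<alpha>) - v \<alpha>) \<le> e
        \<and> norm (y p' (pos p' \<alpha>) - v \<alpha>) \<le> e \<and> norm (y q' (pos q' \<alpha>) - v \<alpha>) \<le> e" if "\<alpha> \<in> J" for \<alpha>
      unfolding v_def pos_def using near pq(1-4) that[unfolded J_def] by blast
    show "norm (y q (pos q \<alpha>)) \<le> 1 \<and> norm (y q' (pos q' \<alpha>)) \<le> 1 \<and> norm (v \<alpha>) \<le> 1" for \<alpha>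
      unfolding v_def using unit pq(2,4) \<open>p\<^sub>0 \<in> P\<close> by blast
    show "norm (\<Sum>\<alpha>\<in>J. \<Sum>\<beta>\<in>J. G p q \<alpha> \<beta> * y p (pos p \<alpha>) * y q (pos q \<beta>)) \<le> 2 * \<delta>"
      "norm (\<Sum>\<alpha>\<in>J. \<Sum>\<beta>\<in>J. G p' q' \<alpha> \<beta> * y p' (pos p' \<alpha>) * y q' (pos q' \<beta>)) \<le> 2 * \<delta>"
      using small pq by blast+
  qed
  then show ?thesis
    unfolding v_def pos_def \<open>card J = card R + n\<close> by simp
qed

lemma countable_large_coordinates:
  fixes f :: "'a::wellorder set \<Rightarrow> nat" and Y :: "('a \<Rightarrow> complex) set"
  assumes pfk: "partition_first_kind f" and "Y \<subseteq> ell1"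
    and isotropic: "\<And>y z. y \<in> Y \<Longrightarrow> z \<in> Y \<Longrightarrow> polar_form f y z = 0" and "\<theta> > 0"
  shows "countable {p. \<exists>y\<in>Y. ell1_norm y \<le> 1 \<and> \<theta> \<le> norm (y p)}"
proof (rule ccontr)
  define Z where "Z = {p. \<exists>y\<in>Y. ell1_norm y \<le> 1 \<and> \<theta> \<le> norm (y p)}"
  define \<delta> where "\<delta> = \<theta>\<^sup>2 / 8"
  \<comment> \<open>\<open>\<delta>\<close> and the tolerance \<open>e\<close> below make \<open>4 * \<delta> + 4 * e * (card R + n)\<^sup>2 \<le> 3 / 4 * \<theta>\<^sup>2\<close>.\<close>
  assume "uncountable {p. \<exists>y\<in>Y. ell1_norm y \<le> 1 \<and> \<theta> \<le> norm (y p)}"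
  then have "uncountable Z"
    unfolding Z_def .
  have "\<forall>p\<in>Z. \<exists>y. y \<in> Y \<and> ell1_norm y \<le> 1 \<and> \<theta> \<le> norm (y p)"
    unfolding Z_def by blast
  then obtain y where y: "\<forall>p\<in>Z. y p \<in> Y \<and> ell1_norm (y p) \<le> 1 \<and> \<theta> \<le> norm (y p p)"
    by (rule bchoice[THEN exE])
  have y_ell1: "y p \<in> ell1" if "p \<in> Z" for p
    using y that \<open>Y \<subseteq> ell1\<close> by blast
  have "\<delta> > 0"
    unfolding \<delta>_def using \<open>\<theta> > 0\<close> by simp
  obtain P R a n where P: "P \<subseteq> Z" "uncountable P" "finite R" and disj: "disjoint_family_on a P"
    and a: "\<And>p. p \<in> P \<Longrightarrow> finite (a p) \<and> card (a p) = n \<and> p \<in> a p \<and> R \<inter> a p = {}"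
    and tail: "\<And>p. p \<in> P \<Longrightarrow> ell1_norm (\<lambda>g. if g \<in> R \<union> a p then 0 else y p g) < \<delta>"
    by (rule ell1_supports_delta_system[where y = y, OF \<open>uncountable Z\<close> y_ell1 \<open>\<delta> > 0\<close>])
      (assumption | rule that)+
  define e where "e = \<theta>\<^sup>2 / (16 * (real (card R + n) ^ 2 + 1))"
  have "0 < 16 * (real (card R + n) ^ 2 + 1)"
    by (intro mult_pos_pos add_nonneg_pos) simp_all
  then have "e > 0"
    unfolding e_def using \<open>\<theta> > 0\<close> by simp
  define root where "root p = {(r, j). r \<in> R \<and> j < n \<and> f {r, nth_elem (a p) j} = 1}" for p
  have "finite (R <+> {..<n})" "countable (Pow (R \<times> {..<n}))"
    using P(3) by (simp_all add: countable_finite)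
  have root: "root p \<in> Pow (R \<times> {..<n})" if "p \<in> P" for p
    unfolding root_def by auto
  obtain P' p\<^sub>0 where P': "P' \<subseteq> P" "uncountable P'" "p\<^sub>0 \<in> P'"
    and same_root: "\<And>p. p \<in> P' \<Longrightarrow> root p = root p\<^sub>0"
    and near: "\<And>p \<alpha>. p \<in> P' \<Longrightarrow> \<alpha> \<in> R <+> {..<n} \<Longrightarrow>
      norm (y p (case_sum id (nth_elem (a p)) \<alpha>) - y p\<^sub>0 (case_sum id (nth_elem (a p\<^sub>0)) \<alpha>)) \<le> e"
    by (rule uncountable_almost_constant_subfamily[where c = root
          and w = "\<lambda>p \<alpha>. y p (case_sum id (nth_elem (a p)) \<alpha>)",
          OF P(2) \<open>finite (R <+> {..<n})\<close> \<open>e > 0\<close> \<open>countable (Pow (R \<times> {..<n}))\<close> root])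
       (assumption | rule that)+
  have in_P: "p \<in> P" if "p \<in> P'" for p
    using P'(1) that by blast
  have "bij_betw (nth_elem (a p\<^sub>0)) {..<n} (a p\<^sub>0)"
    using a[OF in_P[OF P'(3)]] by (simp add: bij_betw_nth_elem)
  then have "p\<^sub>0 \<in> nth_elem (a p\<^sub>0) ` {..<n}"
    using a[OF in_P[OF P'(3)]] by (simp add: bij_betw_def)
  then obtain k where "k < n" "nth_elem (a p\<^sub>0) k = p\<^sub>0"
    by (auto elim!: imageE)
  have card: "finite (a p) \<and> card (a p) = n" if "p \<in> P'" for p
    using a[OF in_P[OF that]] by simp
  obtain p q p' q' where pq: "p \<in> P'" "q \<in> P'" "p' \<in> P'" "q' \<in> P'" "p \<noteq> q" "p' \<noteq> q'"
    and edge: "f {nth_elem (a p) k, nth_elem (a q) k} = 1"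
    and non_edge: "f {nth_elem (a p') k, nth_elem (a q') k} = 0"
    and same_edges: "\<forall>i<n. \<forall>j<n. (i, j) \<noteq> (k, k) \<longrightarrow>
      f {nth_elem (a p) i, nth_elem (a q) j} = f {nth_elem (a p') i, nth_elem (a q') j}"
    by (rule partition_first_kind_witnesses[OF pfk P'(2) disjoint_family_on_mono[OF P'(1) disj] card \<open>k < n\<close>])
       (assumption | rule that)+
  have "norm (y p\<^sub>0 (nth_elem (a p\<^sub>0) k)) ^ 2 \<le> 4 * \<delta> + 4 * e * real (card R + n) ^ 2"
  proof (rule coordinate_bound_in_isotropic_delta_system[where y = y and a = a and \<delta> = \<delta>,
        OF P(3) disjoint_family_on_mono[OF P'(1) disj]
        _ _ _ _ _ near P'(3) \<open>k < n\<close> pq edge non_edge same_edges])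
    show "finite (a s) \<and> card (a s) = n \<and> R \<inter> a s = {}" if "s \<in> P'" for s
      using a[OF in_P[OF that]] by simp
    show "f {r, nth_elem (a s) j} = 1 \<longleftrightarrow> f {r, nth_elem (a t) j} = 1"
      if "s \<in> P'" "t \<in> P'" "r \<in> R" "j < n" for s t r j
    proof -
      have "(r, j) \<in> root s \<longleftrightarrow> (r, j) \<in> root t"
        using same_root[OF that(1)] same_root[OF that(2)] by simp
      with that(3,4) show ?thesis
        unfolding root_def by simp
    qed
    show "y s \<in> ell1 \<and> ell1_norm (y s) \<le> 1" if "s \<in> P'" for s
      using y y_ell1 P(1) in_P[OF that] by blast
    show "polar_form f (y s) (y t) = 0" if "s \<in> P'" "t \<in> P'" for s t
      using isotropic y P(1) in_P[OF that(1)] in_P[OF that(2)] by blast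
    show "ell1_norm (\<lambda>g. if g \<in> R \<union> a s then 0 else y s g) \<le> \<delta>" if "s \<in> P'" for s
      using tail[OF in_P[OF that]] by simp
  qed
  moreover have "\<theta> \<le> norm (y p\<^sub>0 (nth_elem (a p\<^sub>0) k))"
    using y P(1) in_P[OF P'(3)] \<open>nth_elem (a p\<^sub>0) k = p\<^sub>0\<close> by auto
  then have "\<theta>\<^sup>2 \<le> norm (y p\<^sub>0 (nth_elem (a p\<^sub>0) k)) ^ 2"
    using \<open>\<theta> > 0\<close> by (simp add: power_mono)
  moreover have "4 * e * real (card R + n) ^ 2 \<le> \<theta>\<^sup>2 / 4"
  proof -
    have "e * (16 * (real (card R + n) ^ 2 + 1)) = \<theta>\<^sup>2"
      using \<open>0 < 16 * (real (card R + n) ^ 2 + 1)\<close> unfolding e_def by simp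
    then have "16 * (e * real (card R + n) ^ 2) + 16 * e = \<theta>\<^sup>2"
      by (simp add: algebra_simps)
    with \<open>e > 0\<close> show ?thesis
      by linarith
  qed
  ultimately have "\<theta>\<^sup>2 \<le> 3 / 4 * \<theta>\<^sup>2"
    unfolding \<delta>_def by linarith
  with \<open>\<theta> > 0\<close> show False
    by simp
qed

theorem mainTheorem4:
  fixes f :: "'a::wellorder set \<Rightarrow> nat" and Y :: "('a \<Rightarrow> complex) set"
  assumes "\<forall>\<alpha> \<beta>. \<alpha> \<noteq> \<beta> \<longrightarrow> f {\<alpha>, \<beta>} \<in> {0, 1}"
    and "partition_first_kind f"
    and "linear_subspace_ell1 Y"
    and "\<forall>x\<in>Y. P_f f x = 0"
  shows "separable_ell1 Y"
proof (rule separable_ell1_if_countable_large_coordinates[OF assms(3)])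
  fix \<theta> :: real assume "\<theta> > 0"
  have "Y \<subseteq> ell1"
    using assms(3) unfolding linear_subspace_ell1_def by blast
  moreover have "polar_form f y z = 0" if "y \<in> Y" "z \<in> Y" for y z
    using polar_form_vanishes_on_isotropic_subspace[OF assms(3,4) that] .
  ultimately show "countable {p. \<exists>y\<in>Y. ell1_norm y \<le> 1 \<and> \<theta> \<le> norm (y p)}"
    by (rule countable_large_coordinates[OF assms(2) _ _ \<open>\<theta> > 0\<close>])
qed

end
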